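(* Let $G$ be a connected graph with adjacency matrix $A$, degree vector $d$, $D=\mathrm{diag}(d)$ and $P=D^{-1}A$. Let $e=(i,j)$, $i\neq j$, be an edge with $a_{ij}>0$ which is not a cut-edge (so that $d_i-a_{ij}>0$ and $d_j-a_{ij}>0$). Let $U=[e_i\ \ e_j]\in\mathbb{R}^{n\times 2}$, let \[ V^T=\begin{bmatrix} s_i&0\\0&s_j\end{bmatrix}U^TA-a_{ij}\begin{bmatrix}0&(d_i-a_{ij})^{-1}\\(d_j-a_{ij})^{-1}&0\end{bmatrix}U^T\in\mathbb{R}^{2\times n},\qquad s_i=\frac{a_{ij}}{d_i(d_i-a_{ij})},\ s_j=\frac{a_{ij}}{d_j(d_j-a_{ij})}, \] let $h\in\mathbb{R}^n$ with $h^T\mathbf 1=1$, and $Z=(I-P+\mathbf 1h^T)^{-1}$. Then $\widehat P=P+UV^T$, the $2\times 2$ matrix $I-V^TZU$ is invertible, and \[ c(e)=\operatorname{Tr}\big((I-V^TZU)^{-1}V^TZ^2U\big). \]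
   Context: Graphs are undirected and possibly weighted on vertex set $\{1,\dots,n\}$, with symmetric nonnegative adjacency matrix $A=(a_{k\ell})$; $d=A\mathbf 1$ (all entries assumed positive), $D=\mathrm{diag}(d)$, $P=D^{-1}A$; $e_k$ is the $k$-th column of the identity and $\mathbf 1$ the all-ones vector. $G$ connected means $P$ irreducible. For an irreducible row-stochastic matrix $Q$ with stationary vector $\pi$, the Kemeny constant is $K(Q)=\sum_j\pi_j m_{kj}$, where $m_{kj}$ is the expected first passage time from $k$ to $j$ ($m_{kk}=0$), independent of $k$; equivalently $K(Q)=\sum_{\ell=2}^n 1/(1-\lambda_\ell)$, where $1=\lambda_1,\lambda_2,\dots,\lambda_n$ are the eigenvalues of $Q$. Removing edge $e=(i,j)$ means replacing $A$ by $\widehat A=A-a_{ij}(e_ie_j^T+e_je_i^T)$; set $\widehat d=\widehat A\mathbf 1$, $\widehat D=\mathrm{diag}(\widehat d)$, $\widehat P=\widehat D^{-1}\widehat A$. The edge $e$ is a cut-edge if the graph with adjacency matrix $\widehat A$ is disconnected. The Kemeny-based centrality score is $c(e)=K(\widehat P)-K(P)$. *)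

theory Defs
  imports "Jordan_Normal_Form.Jordan_Normal_Form" "HOL-Library.Multiset"
begin

text \<open>Vertices are indexed 0..n-1 (instead of 1..n).  Matrices are Jordan_Normal_Form matrices.\<close>

definition ones :: "nat \<Rightarrow> real vec" where
  "ones n = vec n (\<lambda>_. 1)"

definition outer :: "real vec \<Rightarrow> real vec \<Rightarrow> real mat" where
  "outer v w = mat (dim_vec v) (dim_vec w) (\<lambda>(k,l). v $ k * w $ l)"

definition degvec :: "real mat \<Rightarrow> real vec" where
  "degvec A = A *\<^sub>v ones (dim_col A)"

definition trans_mat :: "real mat \<Rightarrow> real mat" where
  "trans_mat A = mat_diag (dim_row A) (\<lambda>k. inverse (degvec A $ k)) * A"

definition irreducible_mat :: "real mat \<Rightarrow> bool" where
  "irreducible_mat Q \<longleftrightarrow> square_mat Q \<and>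
     (\<forall>k < dim_row Q. \<forall>l < dim_row Q. \<exists>m. (Q ^\<^sub>m m) $$ (k,l) > 0)"

definition connected_graph :: "real mat \<Rightarrow> bool" where
  "connected_graph A \<longleftrightarrow> irreducible_mat (trans_mat A)"

definition remove_edge :: "real mat \<Rightarrow> nat \<Rightarrow> nat \<Rightarrow> real mat" where
  "remove_edge A i j = A - A $$ (i,j) \<cdot>\<^sub>m
     (outer (unit_vec (dim_row A) i) (unit_vec (dim_row A) j)
      + outer (unit_vec (dim_row A) j) (unit_vec (dim_row A) i))"

definition cut_edge :: "real mat \<Rightarrow> nat \<Rightarrow> nat \<Rightarrow> bool" where
  "cut_edge A i j \<longleftrightarrow> \<not> connected_graph (remove_edge A i j)"

text \<open>Kemeny constant: sum of 1/(1-lambda) over the eigenvalues lambda_2..lambda_n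
  (with algebraic multiplicity), i.e. over all roots of the characteristic polynomial
  with one copy of the eigenvalue 1 removed.\<close>
definition kemeny :: "real mat \<Rightarrow> complex" where
  "kemeny Q = sum_mset (image_mset (\<lambda>z. 1 / (1 - z))
                (proots (char_poly (map_mat complex_of_real Q)) - {#1#}))"

definition kemeny_centrality :: "real mat \<Rightarrow> nat \<Rightarrow> nat \<Rightarrow> complex" where
  "kemeny_centrality A i j = kemeny (trans_mat (remove_edge A i j)) - kemeny (trans_mat A)"

definition mat_inv :: "real mat \<Rightarrow> real mat" where
  "mat_inv M = (SOME B. B \<in> carrier_mat (dim_row M) (dim_row M) \<and> inverts_mat M B \<and> inverts_mat B M)"

definition trace_mat :: "real mat \<Rightarrow> real" where
  "trace_mat M = (\<Sum>k < dim_row M. M $$ (k,k))"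

end

theory Submission
  imports Defs "Jordan_Normal_Form.Schur_Decomposition"
begin

text \<open>Removing a non-cut edge changes only rows \<open>i\<close> and \<open>j\<close> of \<open>P\<close>, so \<open>P\<^sup>^ = P + U V\<^sup>T\<close> with
  \<open>U = [e\<^sub>i e\<^sub>j]\<close>. For a connected graph \<open>I - P + \<one> h\<^sup>T\<close> is nonsingular (a kernel vector is
  harmonic, hence constant because its Dirichlet energy vanishes, hence zero), and
  \<open>K(P) = tr Z - 1\<close> for its inverse \<open>Z\<close>: conjugating by \<open>S = [\<one> e\<^sub>2 \<dots> e\<^sub>n]\<close> splits off the
  eigenvalue \<open>1\<close> of \<open>P\<close>, so the eigenvalues of \<open>I - P + \<one> h\<^sup>T\<close> are \<open>1\<close> and the \<open>1 - \<lambda>\<^sub>k\<close>, and the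
  trace of an inverse is the sum of the reciprocal eigenvalues (via a Schur triangularization).
  Since \<open>I - P\<^sup>^ + \<one> h\<^sup>T = Z\<^sup>-\<^sup>1 - U V\<^sup>T\<close>, the Sherman--Morrison--Woodbury formula gives
  \<open>Z\<^sup>^ = Z + Z U (I - V\<^sup>T Z U)\<^sup>-\<^sup>1 V\<^sup>T Z\<close>, and cyclicity of the trace turns \<open>tr Z\<^sup>^ - tr Z\<close> into the
  trace of a \<open>2 \<times> 2\<close> matrix.\<close>

section \<open>Traces and spectra\<close>

lemma index_mult_mat_sum:
  assumes "A \<in> carrier_mat nr m" "B \<in> carrier_mat m nc" "k < nr" "l < nc"
  shows "(A * B) $$ (k,l) = (\<Sum>r<m. A $$ (k,r) * B $$ (r,l))"
  using assms by (auto simp: scalar_prod_def lessThan_atLeast0 intro!: sum.cong)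

definition mat_trace :: "'a::comm_ring_1 mat \<Rightarrow> 'a" where
  "mat_trace A = (\<Sum>k<dim_row A. A $$ (k,k))"

lemma trace_mat_eq_mat_trace: "trace_mat A = mat_trace A"
  by (simp add: trace_mat_def mat_trace_def)

lemma mat_trace_mult_comm:
  fixes A :: "'a::comm_ring_1 mat"
  assumes A: "A \<in> carrier_mat n m" and B: "B \<in> carrier_mat m n"
  shows "mat_trace (A * B) = mat_trace (B * A)"
proof -
  have "mat_trace (A * B) = (\<Sum>k<n. (A * B) $$ (k,k))" using A by (simp add: mat_trace_def)
  also have "\<dots> = (\<Sum>k<n. \<Sum>r<m. A $$ (k,r) * B $$ (r,k))"
    using A B by (intro sum.cong refl index_mult_mat_sum) auto
  also have "\<dots> = (\<Sum>r<m. \<Sum>k<n. B $$ (r,k) * A $$ (k,r))"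
    by (subst sum.swap) (simp add: mult.commute)
  also have "\<dots> = (\<Sum>k<m. (B * A) $$ (k,k))"
    using A B by (intro sum.cong refl index_mult_mat_sum[symmetric]) auto
  also have "\<dots> = mat_trace (B * A)" using B by (simp add: mat_trace_def)
  finally show ?thesis .
qed

lemma mat_trace_add:
  "A \<in> carrier_mat n n \<Longrightarrow> B \<in> carrier_mat n n \<Longrightarrow> mat_trace (A + B) = mat_trace A + mat_trace B"
  by (simp add: mat_trace_def sum.distrib)

lemma mat_trace_similar:
  fixes A B :: "'a::comm_ring_1 mat"
  assumes "similar_mat A B"
  shows "mat_trace A = mat_trace B"
proof -
  obtain P Q where wit: "similar_mat_wit A B P Q" using assms by (auto simp: similar_mat_def)
  note c = similar_mat_witD[OF refl wit]
  have "mat_trace A = mat_trace (P * (B * Q))"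
    unfolding c(3) using c(5-7) by (subst assoc_mult_mat) auto
  also have "\<dots> = mat_trace (B * Q * P)" using c(5-7) by (intro mat_trace_mult_comm) auto
  also have "B * Q * P = B * (Q * P)" using c(5-7) by (subst assoc_mult_mat) auto
  also have "\<dots> = B" using c(2,5) by simp
  finally show ?thesis .
qed

lemma mat_trace_of_real:
  "A \<in> carrier_mat n n \<Longrightarrow> mat_trace (map_mat of_real A) = of_real (mat_trace A)"
  by (simp add: mat_trace_def of_real_sum)

lemma proots_prod_linear_factors: "proots (\<Prod>a\<leftarrow>as. [:- a, 1:]) = mset (as :: complex list)"
proof (induction as)
  case (Cons a as)
  have "(\<Prod>a\<leftarrow>as. [:- a, 1:]) \<noteq> (0 :: complex poly)"
    by (auto simp: prod_list_zero_iff)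
  then have "proots ([:- a, 1:] * (\<Prod>a\<leftarrow>as. [:- a, 1:])) = proots [:- a, 1:] + proots (\<Prod>a\<leftarrow>as. [:- a, 1:])"
    by (intro proots_mult) auto
  then show ?case using Cons by simp
qed simp

lemma proots_char_poly_upper_triangular:
  fixes B :: "complex mat"
  assumes "B \<in> carrier_mat m m" "upper_triangular B"
  shows "proots (char_poly B) = mset (diag_mat B)"
  using char_poly_upper_triangular[OF assms] proots_prod_linear_factors by simp

lemma similar_upper_triangular_exists:
  fixes A :: "complex mat"
  assumes A: "A \<in> carrier_mat n n"
  obtains T where "T \<in> carrier_mat n n" "upper_triangular T" "similar_mat A T"
proof -
  obtain as where "char_poly A = (\<Prod>a\<leftarrow>as. [:- a, 1:])" using char_poly_factorized[OF A] by blast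
  from schur_decomposition_exists[OF A this] that show thesis by blast
qed

lemma similar_mat_one_minus:
  fixes A B :: "'a::comm_ring_1 mat"
  assumes sim: "similar_mat A B" and A: "A \<in> carrier_mat n n"
  shows "similar_mat (1\<^sub>m n - A) (1\<^sub>m n - B)"
proof -
  obtain P Q where wit: "similar_mat_wit A B P Q" using sim by (auto simp: similar_mat_def)
  note c = similar_mat_witD2[OF A wit]
  have "P * (1\<^sub>m n - B) = P - P * B"
    using c(5,6) by (subst mult_minus_distrib_mat[of P n n]) auto
  then have "P * (1\<^sub>m n - B) * Q = (P - P * B) * Q" by simp
  also have "\<dots> = P * Q - P * B * Q"
    using c(5-7) by (subst minus_mult_distrib_mat[of P n n]) auto
  also have "\<dots> = 1\<^sub>m n - A" unfolding c(1,3) ..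
  finally show ?thesis
    using c(1,2,4-7) by (intro similar_matI[of _ _ P Q n]) auto
qed

lemma proots_char_poly_one_minus:
  fixes A :: "complex mat"
  assumes A: "A \<in> carrier_mat m m"
  shows "proots (char_poly (1\<^sub>m m - A)) = image_mset (\<lambda>z. 1 - z) (proots (char_poly A))"
proof -
  obtain T where T: "T \<in> carrier_mat m m" "upper_triangular T" "similar_mat A T"
    using similar_upper_triangular_exists[OF A] by blast
  have "upper_triangular (1\<^sub>m m - T)" using T by (intro upper_triangularI) auto
  moreover have "diag_mat (1\<^sub>m m - T) = map (\<lambda>z. 1 - z) (diag_mat T)"
    using T by (simp add: diag_mat_def)
  moreover have "proots (char_poly (1\<^sub>m m - T)) = mset (diag_mat (1\<^sub>m m - T))"
    using T(1) \<open>upper_triangular (1\<^sub>m m - T)\<close> by (intro proots_char_poly_upper_triangular) auto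
  ultimately show ?thesis
    using char_poly_similar[OF T(3)] char_poly_similar[OF similar_mat_one_minus[OF T(3) A]]
      proots_char_poly_upper_triangular[OF T(1,2)]
    by simp
qed

lemma left_inverse_upper_triangular:
  fixes T W :: "'a::field mat"
  assumes T: "T \<in> carrier_mat n n" "upper_triangular T"
    and W: "W \<in> carrier_mat n n" "W * T = 1\<^sub>m n"
  shows "l < n \<Longrightarrow> (\<forall>k. l < k \<and> k < n \<longrightarrow> W $$ (k,l) = 0) \<and> W $$ (l,l) * T $$ (l,l) = 1"
proof (induction l rule: less_induct)
  case (less l)
  have col_l: "(W * T) $$ (k,l) = W $$ (k,l) * T $$ (l,l)" if k: "l \<le> k" "k < n" for k
  proof -
    have "(W * T) $$ (k,l) = (\<Sum>r<n. W $$ (k,r) * T $$ (r,l))"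
      using T W k less.prems by (intro index_mult_mat_sum) auto
    also have "\<dots> = W $$ (k,l) * T $$ (l,l) + (\<Sum>r\<in>{..<n}-{l}. W $$ (k,r) * T $$ (r,l))"
      using less.prems by (subst sum.remove[of _ l]) auto
    also have "(\<Sum>r\<in>{..<n}-{l}. W $$ (k,r) * T $$ (r,l)) = 0"
    proof (intro sum.neutral ballI)
      fix r assume r: "r \<in> {..<n}-{l}"
      show "W $$ (k,r) * T $$ (r,l) = 0"
      proof (cases "r < l")
        case True
        with less.IH[of r] k show ?thesis by auto
      next
        case False
        with r T have "T $$ (r,l) = 0" by auto
        then show ?thesis by simp
      qed
    qed
    finally show ?thesis by simp
  qed
  have diag: "W $$ (l,l) * T $$ (l,l) = 1"
    using col_l[of l] W less.prems by simp
  moreover have "W $$ (k,l) = 0" if "l < k" "k < n" for k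
  proof -
    have "W $$ (k,l) * T $$ (l,l) = 0" using col_l[of k] W that less.prems by simp
    with diag show ?thesis by auto
  qed
  ultimately show ?case by blast
qed

lemma mat_trace_inverse_eq_sum_reciprocal_roots:
  fixes M N :: "complex mat"
  assumes M: "M \<in> carrier_mat n n" and N: "N \<in> carrier_mat n n" and MN: "M * N = 1\<^sub>m n"
  shows "mat_trace N = (\<Sum>z\<in>#proots (char_poly M). 1 / z)"
proof -
  obtain T where T: "T \<in> carrier_mat n n" "upper_triangular T" "similar_mat M T"
    using similar_upper_triangular_exists[OF M] by blast
  obtain P Q where wit: "similar_mat_wit M T P Q" using T(3) by (auto simp: similar_mat_def)
  note c = similar_mat_witD2[OF M wit]
  have NM: "N * M = 1\<^sub>m n" by (rule mat_mult_left_right_inverse[OF M N MN])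
  \<comment> \<open>\<open>W\<close> is \<open>N\<close> in the Schur basis, hence a left inverse of the triangular \<open>T\<close>.\<close>
  define W where "W = Q * N * P"
  have Wc: "W \<in> carrier_mat n n" using c(6,7) N by (simp add: W_def)
  have "Q * M * P = (Q * P) * T * (Q * P)"
    unfolding c(3) using c(5-7) by (simp add: assoc_mult_mat[of _ n n _ n _ n])
  then have TQMP: "T = Q * M * P" using c(2,5) by simp
  have "W * T = Q * N * (P * Q) * M * P"
    unfolding W_def TQMP using c(4-7) N by (simp add: assoc_mult_mat[of _ n n _ n _ n])
  also have "\<dots> = Q * (N * M) * P"
    using c(1,4-7) N by (simp add: assoc_mult_mat[of _ n n _ n _ n])
  finally have WT: "W * T = 1\<^sub>m n" using c(2,6,7) NM by simp
  have "P * W * Q = (P * Q) * N * (P * Q)"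
    unfolding W_def using c(6,7) N by (simp add: assoc_mult_mat[of _ n n _ n _ n])
  then have "N = P * W * Q" using c(1) N by simp
  then have "similar_mat N W"
    using c(1,2,6,7) N Wc by (intro similar_matI[of _ _ P Q n]) auto
  then have "mat_trace N = mat_trace W" by (rule mat_trace_similar)
  also have "\<dots> = (\<Sum>k<n. 1 / T $$ (k,k))"
    unfolding mat_trace_def using Wc
  proof (intro sum.cong)
    fix k assume "k \<in> {..<n}"
    then have "W $$ (k,k) * T $$ (k,k) = 1"
      using left_inverse_upper_triangular[OF T(1,2) Wc WT] by auto
    then show "W $$ (k,k) = 1 / T $$ (k,k)" by (metis divide_eq_eq mult_eq_0_iff zero_neq_one)
  qed auto
  also have "\<dots> = (\<Sum>z\<leftarrow>diag_mat T. 1 / z)"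
    using T(1) by (simp add: diag_mat_def interv_sum_list_conv_sum_set_nat lessThan_atLeast0 comp_def)
  also have "\<dots> = (\<Sum>z\<in>#proots (char_poly M). 1 / z)"
    using char_poly_similar[OF T(3)] proots_char_poly_upper_triangular[OF T(1,2)]
    by (simp add: mset_map[symmetric] sum_mset_sum_list del: mset_map)
  finally show ?thesis .
qed

section \<open>Kemeny's constant as a trace\<close>

lemma char_poly_nonzero: "A \<in> carrier_mat n n \<Longrightarrow> char_poly (A :: 'a::comm_ring_1 mat) \<noteq> 0"
  using degree_monic_char_poly[of A n] by (metis coeff_0 zero_neq_one)

lemma char_poly_first_col_unit:
  fixes X :: "'a::comm_ring_1 mat"
  assumes X: "X \<in> carrier_mat (Suc m) (Suc m)"
    and col0: "\<And>k. k < Suc m \<Longrightarrow> X $$ (k,0) = (if k = 0 then 1 else 0)"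
  shows "char_poly X = [:-1, 1:] * char_poly (mat m m (\<lambda>(k,l). X $$ (k+1, l+1)))"
proof -
  let ?X1 = "mat 1 1 (\<lambda>_. 1) :: 'a mat"
  let ?X2 = "mat 1 m (\<lambda>(k,l). X $$ (0, l+1))"
  let ?X4 = "mat m m (\<lambda>(k,l). X $$ (k+1, l+1))"
  have "X = four_block_mat ?X1 ?X2 (0\<^sub>m m 1) ?X4"
  proof (rule eq_matI)
    fix k l assume "k < dim_row (four_block_mat ?X1 ?X2 (0\<^sub>m m 1) ?X4)"
       "l < dim_col (four_block_mat ?X1 ?X2 (0\<^sub>m m 1) ?X4)"
    then have "k < Suc m" "l < Suc m" by auto
    then show "X $$ (k,l) = four_block_mat ?X1 ?X2 (0\<^sub>m m 1) ?X4 $$ (k,l)"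
      using col0[of k] by (cases k; cases l) auto
  qed (use X in auto)
  then have "char_poly X = char_poly ?X1 * char_poly ?X4"
    by (metis char_poly_four_block_zeros_col dim_col_mat(1) dim_row_mat(1) carrier_mat_triv)
  moreover have "upper_triangular ?X1" by auto
  then have "char_poly ?X1 = [:-1, 1:]"
    using char_poly_upper_triangular[of ?X1 1] by (auto simp: diag_mat_def)
  ultimately show ?thesis by simp
qed

text \<open>Conjugating by \<open>S = [\<one> e\<^sub>2 \<dots> e\<^sub>n]\<close> (\<open>ones_col_mat\<close>) turns a matrix with unit row sums into
  one whose first column is \<open>e\<^sub>1\<close>; this splits off the eigenvalue \<open>1\<close>, and the remaining lower right
  block is \<open>deflate_mat\<close>.\<close>

definition ones_col_mat :: "nat \<Rightarrow> 'a::field mat" where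
  "ones_col_mat n = mat n n (\<lambda>(k,l). if l = 0 \<or> k = l then 1 else 0)"

definition ones_col_mat_inv :: "nat \<Rightarrow> 'a::field mat" where
  "ones_col_mat_inv n = mat n n (\<lambda>(k,l). if k = l then 1 else if l = 0 then -1 else 0)"

definition deflate_mat :: "'a::comm_ring_1 mat \<Rightarrow> 'a mat" where
  "deflate_mat B = mat (dim_row B - 1) (dim_row B - 1) (\<lambda>(k,l). B $$ (k+1, l+1) - B $$ (0, l+1))"

lemma ones_col_mat_carrier [simp]: "ones_col_mat n \<in> carrier_mat n n"
  and ones_col_mat_inv_carrier [simp]: "ones_col_mat_inv n \<in> carrier_mat n n"
  by (auto simp: ones_col_mat_def ones_col_mat_inv_def)

lemma ones_col_mat_inv_mult_index:
  assumes B: "B \<in> carrier_mat n nc" and k: "k < n" and l: "l < nc"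
  shows "(ones_col_mat_inv n * B) $$ (k,l) = (if k = 0 then B $$ (0,l) else B $$ (k,l) - B $$ (0,l))"
proof -
  have "(ones_col_mat_inv n * B) $$ (k,l) = (\<Sum>r<n. ones_col_mat_inv n $$ (k,r) * B $$ (r,l))"
    using B k l by (intro index_mult_mat_sum) auto
  also have "\<dots> = (\<Sum>r<n. (if r = k then B $$ (r,l) else 0) - (if r = 0 \<and> k \<noteq> 0 then B $$ (r,l) else 0))"
    using k by (intro sum.cong refl) (auto simp: ones_col_mat_inv_def)
  also have "\<dots> = (if k = 0 then B $$ (0,l) else B $$ (k,l) - B $$ (0,l))"
    using k by (simp add: sum_subtractf sum.delta' sum.neutral)
  finally show ?thesis .
qed

lemma mult_ones_col_mat_index:
  assumes B: "B \<in> carrier_mat nr n" and k: "k < nr" and l: "l < n"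
  shows "(B * ones_col_mat n) $$ (k,l) = (if l = 0 then (\<Sum>r<n. B $$ (k,r)) else B $$ (k,l))"
proof -
  have "(B * ones_col_mat n) $$ (k,l) = (\<Sum>r<n. B $$ (k,r) * ones_col_mat n $$ (r,l))"
    using B k l by (intro index_mult_mat_sum) auto
  also have "\<dots> = (\<Sum>r<n. if l = 0 then B $$ (k,r) else if r = l then B $$ (k,r) else 0)"
    using l by (intro sum.cong refl) (auto simp: ones_col_mat_def)
  also have "\<dots> = (if l = 0 then (\<Sum>r<n. B $$ (k,r)) else B $$ (k,l))"
    using l by (auto simp: sum.delta)
  finally show ?thesis .
qed

lemma ones_col_mat_inv_mult_ones_col_mat: "ones_col_mat_inv n * ones_col_mat n = 1\<^sub>m n"
proof (rule eq_matI)
  fix k l assume "k < dim_row (1\<^sub>m n)" "l < dim_col (1\<^sub>m n)"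
  then show "(ones_col_mat_inv n * ones_col_mat n) $$ (k,l) = 1\<^sub>m n $$ (k,l)"
    by (subst ones_col_mat_inv_mult_index[OF ones_col_mat_carrier]) (auto simp: ones_col_mat_def)
qed (auto simp: ones_col_mat_def ones_col_mat_inv_def)

lemma ones_col_mat_mult_ones_col_mat_inv: "ones_col_mat n * ones_col_mat_inv n = 1\<^sub>m n"
  by (rule mat_mult_left_right_inverse[OF _ _ ones_col_mat_inv_mult_ones_col_mat]) auto

lemma char_poly_row_sum_one:
  fixes B :: "'a::field mat"
  assumes B: "B \<in> carrier_mat (Suc m) (Suc m)"
    and rows: "\<And>k. k < Suc m \<Longrightarrow> (\<Sum>l<Suc m. B $$ (k,l)) = 1"
  shows "char_poly B = [:-1, 1:] * char_poly (deflate_mat B)"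
proof -
  define S :: "'a mat" where "S = ones_col_mat (Suc m)"
  define S' :: "'a mat" where "S' = ones_col_mat_inv (Suc m)"
  have S: "S \<in> carrier_mat (Suc m) (Suc m)" "S' \<in> carrier_mat (Suc m) (Suc m)"
    "S * S' = 1\<^sub>m (Suc m)" "S' * S = 1\<^sub>m (Suc m)"
    by (simp_all add: S_def S'_def ones_col_mat_mult_ones_col_mat_inv ones_col_mat_inv_mult_ones_col_mat)
  define X where "X = S' * (B * S)"
  have Xc: "X \<in> carrier_mat (Suc m) (Suc m)" using B S by (simp add: X_def)
  have BS: "(B * S) $$ (k,l) = (if l = 0 then 1 else B $$ (k,l))" if "k < Suc m" "l < Suc m" for k l
    using that rows by (simp add: S_def mult_ones_col_mat_index[OF B])
  have X: "X $$ (k,l) = (if k = 0 then (B * S) $$ (0,l) else (B * S) $$ (k,l) - (B * S) $$ (0,l))"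
    if "k < Suc m" "l < Suc m" for k l
    unfolding X_def S'_def using that B S by (intro ones_col_mat_inv_mult_index) auto
  have "S * X * S' = (S * S') * B * (S * S')"
    unfolding X_def using B S(1,2) by (simp add: assoc_mult_mat[of _ "Suc m" "Suc m" _ "Suc m" _ "Suc m"])
  then have "B = S * X * S'" using B S by simp
  then have "similar_mat B X"
    using B Xc S by (intro similar_matI[of _ _ S S' "Suc m"]) auto
  moreover have "char_poly X = [:-1, 1:] * char_poly (mat m m (\<lambda>(k,l). X $$ (k+1, l+1)))"
    using Xc by (rule char_poly_first_col_unit) (simp add: X BS)
  moreover have "mat m m (\<lambda>(k,l). X $$ (k+1, l+1)) = deflate_mat B"
    using B by (intro eq_matI) (auto simp: deflate_mat_def X BS)
  ultimately show ?thesis by (simp add: char_poly_similar)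
qed

lemma deflate_mat_one_minus_plus_ones_row:
  fixes Q :: "'a::comm_ring_1 mat"
  assumes "Q \<in> carrier_mat (Suc m) (Suc m)"
  shows "deflate_mat (mat (Suc m) (Suc m) (\<lambda>(k,l). (if k = l then 1 else 0) - Q $$ (k,l) + g l))
    = 1\<^sub>m m - deflate_mat Q"
  using assms by (intro eq_matI) (auto simp: deflate_mat_def)

lemma proots_char_poly_row_sum_one:
  fixes B :: "complex mat"
  assumes B: "B \<in> carrier_mat (Suc m) (Suc m)"
    and rows: "\<And>k. k < Suc m \<Longrightarrow> (\<Sum>l<Suc m. B $$ (k,l)) = 1"
  shows "proots (char_poly B) = add_mset 1 (proots (char_poly (deflate_mat B)))"
proof -
  have "deflate_mat B \<in> carrier_mat m m" using B by (simp add: deflate_mat_def)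
  then have "proots ([:-1, 1:] * char_poly (deflate_mat B)) = proots [:-1, 1:] + proots (char_poly (deflate_mat B))"
    by (intro proots_mult) (auto dest: char_poly_nonzero)
  then show ?thesis
    using char_poly_row_sum_one[OF B rows] proots_linear_factor[of "-1::complex"] by simp
qed

text \<open>The eigenvalues of \<open>I - Q + \<one> g\<^sup>T\<close> are \<open>1\<close> and the \<open>1 - \<lambda>\<close> for the eigenvalues \<open>\<lambda>\<close> of \<open>Q\<close>
  other than the split-off \<open>1\<close>.\<close>

lemma sum_reciprocal_one_minus_roots_eq_trace:
  fixes Q N :: "complex mat" and g :: "nat \<Rightarrow> complex"
  assumes Q: "Q \<in> carrier_mat n n" and n: "0 < n"
    and rows: "\<And>k. k < n \<Longrightarrow> (\<Sum>l<n. Q $$ (k,l)) = 1" and g: "(\<Sum>l<n. g l) = 1"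
    and N: "N \<in> carrier_mat n n"
    and MN: "mat n n (\<lambda>(k,l). (if k = l then 1 else 0) - Q $$ (k,l) + g l) * N = 1\<^sub>m n"
  shows "(\<Sum>z\<in>#proots (char_poly Q) - {#1#}. 1 / (1 - z)) = mat_trace N - 1"
proof -
  obtain m where nm: "n = Suc m" using n by (cases n) auto
  define M where "M = mat n n (\<lambda>(k,l). (if k = l then 1 else 0) - Q $$ (k,l) + g l)"
  define D where "D = deflate_mat Q"
  have Mc: "M \<in> carrier_mat n n" by (simp add: M_def)
  have Dc: "D \<in> carrier_mat m m" using Q nm by (simp add: D_def deflate_mat_def)
  have M_rows: "(\<Sum>l<n. M $$ (k,l)) = 1" if "k < n" for k
  proof -
    have "(\<Sum>l<n. M $$ (k,l)) = (\<Sum>l<n. (if k = l then 1 else 0) - Q $$ (k,l) + g l)"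
      unfolding M_def using that by (intro sum.cong refl) auto
    also have "\<dots> = 1" using that rows g by (simp add: sum.distrib sum_subtractf)
    finally show ?thesis .
  qed
  have "proots (char_poly Q) = add_mset 1 (proots (char_poly D))"
    unfolding D_def using Q rows nm by (intro proots_char_poly_row_sum_one) auto
  moreover have "proots (char_poly M) = add_mset 1 (proots (char_poly (1\<^sub>m m - D)))"
    using proots_char_poly_row_sum_one[of M m] Mc M_rows nm
      deflate_mat_one_minus_plus_ones_row[of Q m g] Q
    by (simp add: D_def M_def)
  moreover have "mat_trace N = (\<Sum>z\<in>#proots (char_poly M). 1 / z)"
    using MN by (intro mat_trace_inverse_eq_sum_reciprocal_roots[OF Mc N]) (simp add: M_def)
  ultimately show ?thesis
    by (simp add: proots_char_poly_one_minus[OF Dc] multiset.map_comp comp_def)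
qed

lemma mat_inv_correct:
  fixes M :: "real mat"
  assumes M: "M \<in> carrier_mat n n" and "det M \<noteq> 0"
  shows "mat_inv M \<in> carrier_mat n n" "M * mat_inv M = 1\<^sub>m n" "mat_inv M * M = 1\<^sub>m n"
proof -
  have "M \<in> Units (ring_mat TYPE(real) n undefined)" by (rule det_non_zero_imp_unit[OF assms])
  then obtain B where "B \<in> carrier_mat n n" "B * M = 1\<^sub>m n" "M * B = 1\<^sub>m n"
    unfolding Units_def by (auto simp: ring_mat_simps)
  then have "\<exists>B. B \<in> carrier_mat (dim_row M) (dim_row M) \<and> inverts_mat M B \<and> inverts_mat B M"
    using M by (auto simp: inverts_mat_def)
  then have "mat_inv M \<in> carrier_mat (dim_row M) (dim_row M) \<and> inverts_mat M (mat_inv M) \<and> inverts_mat (mat_inv M) M"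
    unfolding mat_inv_def by (rule someI_ex)
  then show "mat_inv M \<in> carrier_mat n n" "M * mat_inv M = 1\<^sub>m n" "mat_inv M * M = 1\<^sub>m n"
    using M by (auto simp: inverts_mat_def)
qed

lemma mat_inv_right_inverse:
  fixes M C :: "real mat"
  assumes M: "M \<in> carrier_mat n n" and C: "C \<in> carrier_mat n n" and MC: "M * C = 1\<^sub>m n"
  shows "invertible_mat M" "mat_inv M = C"
proof -
  have "C * M = 1\<^sub>m n" by (rule mat_mult_left_right_inverse[OF M C MC])
  then show "invertible_mat M"
    using M C MC by (auto simp: invertible_mat_def inverts_mat_def intro!: exI[of _ C])
  have "det M * det C = 1" using det_mult[OF M C] MC by simp
  then have "det M \<noteq> 0" by auto
  note Z = mat_inv_correct[OF M this]
  have "mat_inv M = mat_inv M * (M * C)" using MC Z(1) by simp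
  also have "\<dots> = (mat_inv M * M) * C" using Z(1) M C by (simp add: assoc_mult_mat[of _ n n _ n _ n])
  also have "\<dots> = C" using Z(3) C by simp
  finally show "mat_inv M = C" .
qed

section \<open>Random walks on connected graphs\<close>

lemma degvec_index: "B \<in> carrier_mat n n \<Longrightarrow> k < n \<Longrightarrow> degvec B $ k = (\<Sum>l<n. B $$ (k,l))"
  by (auto simp: degvec_def ones_def scalar_prod_def lessThan_atLeast0 intro!: sum.cong)

lemma trans_mat_carrier: "B \<in> carrier_mat n n \<Longrightarrow> trans_mat B \<in> carrier_mat n n"
  unfolding trans_mat_def by (simp add: mat_diag_mult_left)

lemma trans_mat_index:
  "B \<in> carrier_mat n n \<Longrightarrow> k < n \<Longrightarrow> l < n \<Longrightarrow> trans_mat B $$ (k,l) = B $$ (k,l) / degvec B $ k"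
  unfolding trans_mat_def by (simp add: mat_diag_mult_left divide_inverse)

lemma trans_mat_row_sum:
  assumes B: "B \<in> carrier_mat n n" and k: "k < n" "degvec B $ k \<noteq> 0"
  shows "(\<Sum>l<n. trans_mat B $$ (k,l)) = 1"
  using B k by (simp add: trans_mat_index degvec_index sum_divide_distrib[symmetric])

lemma symmetric_mat_index:
  "B \<in> carrier_mat n n \<Longrightarrow> transpose_mat B = B \<Longrightarrow> k < n \<Longrightarrow> l < n \<Longrightarrow> B $$ (k,l) = B $$ (l,k)"
  by (metis index_transpose_mat(1) carrier_matD)

lemma symmetric_mat_col_sum:
  assumes B: "B \<in> carrier_mat n n" "transpose_mat B = B" and l: "l < n"
  shows "(\<Sum>k<n. B $$ (k,l)) = degvec B $ l"
proof -
  have "(\<Sum>k<n. B $$ (k,l)) = (\<Sum>k<n. B $$ (l,k))"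
    using B l by (intro sum.cong refl) (auto intro: symmetric_mat_index)
  then show ?thesis using B(1) l by (simp add: degvec_index)
qed

definition connected_weighted_graph :: "nat \<Rightarrow> real mat \<Rightarrow> bool" where
  "connected_weighted_graph n B \<longleftrightarrow> B \<in> carrier_mat n n \<and> transpose_mat B = B
     \<and> (\<forall>k<n. \<forall>l<n. 0 \<le> B $$ (k,l)) \<and> (\<forall>k<n. 0 < degvec B $ k) \<and> connected_graph B"

lemma pow_mat_index_nonzero_imp_eq:
  fixes Q :: "real mat" and x :: "nat \<Rightarrow> real"
  assumes Q: "Q \<in> carrier_mat n n"
    and step: "\<And>k l. k < n \<Longrightarrow> l < n \<Longrightarrow> Q $$ (k,l) \<noteq> 0 \<Longrightarrow> x k = x l"
  shows "k < n \<Longrightarrow> l < n \<Longrightarrow> (Q ^\<^sub>m m) $$ (k,l) \<noteq> 0 \<Longrightarrow> x k = x l"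
proof (induction m arbitrary: l)
  case 0
  then show ?case using Q by (auto split: if_splits)
next
  case (Suc m)
  have "(Q ^\<^sub>m Suc m) $$ (k,l) = (\<Sum>r<n. (Q ^\<^sub>m m) $$ (k,r) * Q $$ (r,l))"
    using Q Suc.prems by (simp only: pow_mat.simps) (rule index_mult_mat_sum, auto)
  with Suc.prems obtain r where r: "r < n" "(Q ^\<^sub>m m) $$ (k,r) * Q $$ (r,l) \<noteq> 0"
    by (metis (no_types, lifting) lessThan_iff sum.neutral)
  then have "x k = x r" using Suc.IH[of r] Suc.prems by auto
  also have "x r = x l" using step[of r l] r Suc.prems by auto
  finally show ?case .
qed

text \<open>A function that is harmonic for a symmetric nonnegative weight matrix has vanishing Dirichlet
  energy \<open>\<Sum>\<^sub>k\<^sub>,\<^sub>l b\<^sub>k\<^sub>l (x\<^sub>k - x\<^sub>l)\<^sup>2\<close>, hence is constant across every edge.\<close>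

lemma harmonic_eq_on_edges:
  fixes B :: "real mat" and x :: "nat \<Rightarrow> real"
  assumes B: "B \<in> carrier_mat n n" "transpose_mat B = B" "\<forall>k<n. \<forall>l<n. 0 \<le> B $$ (k,l)"
    and harmonic: "\<And>k. k < n \<Longrightarrow> (\<Sum>l<n. B $$ (k,l) * x l) = degvec B $ k * x k"
    and kl: "k < n" "l < n" "B $$ (k,l) \<noteq> 0"
  shows "x k = x l"
proof -
  define E where "E = (\<Sum>k<n. degvec B $ k * (x k)\<^sup>2)"
  have square_left: "(\<Sum>k<n. \<Sum>l<n. B $$ (k,l) * (x k)\<^sup>2) = E"
    unfolding E_def using B(1) by (intro sum.cong refl) (simp add: degvec_index sum_distrib_right)
  have cross: "(\<Sum>k<n. \<Sum>l<n. B $$ (k,l) * (x k * x l)) = E"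
    unfolding E_def
  proof (intro sum.cong refl)
    fix k assume "k \<in> {..<n}"
    have "(\<Sum>l<n. B $$ (k,l) * (x k * x l)) = x k * (\<Sum>l<n. B $$ (k,l) * x l)"
      by (simp add: sum_distrib_left algebra_simps)
    also have "\<dots> = x k * (degvec B $ k * x k)"
      using \<open>k \<in> {..<n}\<close> harmonic by simp
    finally
    show "(\<Sum>l<n. B $$ (k,l) * (x k * x l)) = degvec B $ k * (x k)\<^sup>2"
      by (simp add: power2_eq_square algebra_simps)
  qed
  have square_right: "(\<Sum>k<n. \<Sum>l<n. B $$ (k,l) * (x l)\<^sup>2) = E"
    unfolding E_def by (subst sum.swap) (simp add: symmetric_mat_col_sum[OF B(1,2)] sum_distrib_right[symmetric])
  have "(\<Sum>k<n. \<Sum>l<n. B $$ (k,l) * (x k - x l)\<^sup>2)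
      = (\<Sum>k<n. \<Sum>l<n. B $$ (k,l) * (x k)\<^sup>2) - 2 * (\<Sum>k<n. \<Sum>l<n. B $$ (k,l) * (x k * x l))
        + (\<Sum>k<n. \<Sum>l<n. B $$ (k,l) * (x l)\<^sup>2)"
    by (simp add: power2_diff algebra_simps sum.distrib sum_subtractf sum_distrib_left)
  then have "(\<Sum>k<n. \<Sum>l<n. B $$ (k,l) * (x k - x l)\<^sup>2) = 0"
    unfolding square_left cross square_right by simp
  moreover have nonneg: "0 \<le> B $$ (k,l) * (x k - x l)\<^sup>2" if "k < n" "l < n" for k l
    using B(3) that by simp
  ultimately have "(\<Sum>l<n. B $$ (k,l) * (x k - x l)\<^sup>2) = 0"
    using kl(1) by (subst (asm) sum_nonneg_eq_0_iff) (auto intro!: sum_nonneg nonneg)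
  then have "B $$ (k,l) * (x k - x l)\<^sup>2 = 0"
    using kl(1,2) by (subst (asm) sum_nonneg_eq_0_iff) (auto intro!: nonneg)
  then show ?thesis using kl(3) by simp
qed

lemma connected_harmonic_const:
  assumes G: "connected_weighted_graph n B"
    and harmonic: "\<And>k. k < n \<Longrightarrow> (\<Sum>l<n. B $$ (k,l) * x l) = degvec B $ k * x k"
    and kl: "k < n" "l < n"
  shows "x k = x l"
proof -
  have B: "B \<in> carrier_mat n n" and Q: "trans_mat B \<in> carrier_mat n n"
    using G by (auto simp: connected_weighted_graph_def trans_mat_carrier)
  have "\<forall>k<n. \<forall>l<n. \<exists>m. 0 < (trans_mat B ^\<^sub>m m) $$ (k,l)"
    using G Q by (auto simp: connected_weighted_graph_def connected_graph_def irreducible_mat_def)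
  then obtain m where "(trans_mat B ^\<^sub>m m) $$ (k,l) > 0" using kl by blast
  moreover have "x k' = x l'" if "k' < n" "l' < n" "trans_mat B $$ (k',l') \<noteq> 0" for k' l'
    using G that harmonic by (intro harmonic_eq_on_edges[of B n])
      (auto simp: connected_weighted_graph_def trans_mat_index)
  ultimately show ?thesis
    using pow_mat_index_nonzero_imp_eq[OF Q, of x k l m] kl by auto
qed

text \<open>The inverse of \<open>perturbed_laplacian P h\<close> is the fundamental matrix \<open>Z\<close> of the statement.\<close>

definition perturbed_laplacian :: "real mat \<Rightarrow> real vec \<Rightarrow> real mat" where
  "perturbed_laplacian Q h = 1\<^sub>m (dim_row Q) - Q + outer (ones (dim_row Q)) h"

lemma perturbed_laplacian_carrier:
  "Q \<in> carrier_mat n n \<Longrightarrow> h \<in> carrier_vec n \<Longrightarrow> perturbed_laplacian Q h \<in> carrier_mat n n"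
  by (simp add: perturbed_laplacian_def outer_def ones_def)

lemma perturbed_laplacian_index:
  "Q \<in> carrier_mat n n \<Longrightarrow> h \<in> carrier_vec n \<Longrightarrow> k < n \<Longrightarrow> l < n \<Longrightarrow>
    perturbed_laplacian Q h $$ (k,l) = (if k = l then 1 else 0) - Q $$ (k,l) + h $ l"
  by (simp add: perturbed_laplacian_def outer_def ones_def)

lemma perturbed_laplacian_add:
  assumes "Q \<in> carrier_mat n n" "E \<in> carrier_mat n n" "h \<in> carrier_vec n"
  shows "perturbed_laplacian (Q + E) h = perturbed_laplacian Q h - E"
proof -
  have "Q + E \<in> carrier_mat n n" using assms(2) by simp
  then show ?thesis
    using assms perturbed_laplacian_carrier[of "Q + E" n h] perturbed_laplacian_carrier[of Q n h]
    by (intro eq_matI) (auto simp: perturbed_laplacian_index[of "Q + E" n h] perturbed_laplacian_index[of Q n h])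
qed

lemma perturbed_laplacian_mult_vec_index:
  assumes B: "B \<in> carrier_mat n n" and h: "h \<in> carrier_vec n" and v: "v \<in> carrier_vec n" and k: "k < n"
  shows "(perturbed_laplacian (trans_mat B) h *\<^sub>v v) $ k
    = v $ k - (\<Sum>l<n. B $$ (k,l) * v $ l) / degvec B $ k + (\<Sum>l<n. h $ l * v $ l)"
proof -
  have Q: "trans_mat B \<in> carrier_mat n n" using B by (rule trans_mat_carrier)
  have "(perturbed_laplacian (trans_mat B) h *\<^sub>v v) $ k
      = (\<Sum>l<n. perturbed_laplacian (trans_mat B) h $$ (k,l) * v $ l)"
    using k v perturbed_laplacian_carrier[OF Q h] by (simp add: scalar_prod_def lessThan_atLeast0)
  also have "\<dots> = (\<Sum>l<n. (if k = l then v $ l else 0) - trans_mat B $$ (k,l) * v $ l + h $ l * v $ l)"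
    using k by (intro sum.cong refl) (simp add: perturbed_laplacian_index[OF Q h] algebra_simps)
  also have "\<dots> = v $ k - (\<Sum>l<n. B $$ (k,l) * v $ l) / degvec B $ k + (\<Sum>l<n. h $ l * v $ l)"
    using k B by (simp add: sum.distrib sum_subtractf trans_mat_index sum_divide_distrib[symmetric])
  finally show ?thesis .
qed

lemma perturbed_laplacian_kernel_trivial:
  assumes G: "connected_weighted_graph n B" and h: "h \<in> carrier_vec n" "h \<bullet> ones n = 1"
    and v: "v \<in> carrier_vec n" "perturbed_laplacian (trans_mat B) h *\<^sub>v v = 0\<^sub>v n"
  shows "v = 0\<^sub>v n"
proof (cases "n = 0")
  case True
  then show ?thesis using v by auto
next
  case False
  have B: "B \<in> carrier_mat n n" "transpose_mat B = B" and d_pos: "\<And>k. k < n \<Longrightarrow> 0 < degvec B $ k"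
    using G by (auto simp: connected_weighted_graph_def)
  define x where "x k = v $ k" for k
  define c where "c = (\<Sum>l<n. h $ l * x l)"
  have Bx: "(\<Sum>l<n. B $$ (k,l) * x l) = degvec B $ k * (x k + c)" if k: "k < n" for k
    using perturbed_laplacian_mult_vec_index[OF B(1) h(1) v(1) k] v(2) k d_pos[OF k]
    by (simp add: x_def c_def field_simps)
  have "(\<Sum>k<n. degvec B $ k * (x k + c)) = (\<Sum>l<n. \<Sum>k<n. B $$ (k,l) * x l)"
    using Bx by (subst sum.swap) simp
  also have "\<dots> = (\<Sum>l<n. degvec B $ l * x l)"
    using B by (simp add: symmetric_mat_col_sum sum_distrib_right[symmetric])
  finally have "c * (\<Sum>k<n. degvec B $ k) = 0"
    by (simp add: algebra_simps sum.distrib sum_distrib_left)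
  moreover have "0 < (\<Sum>k<n. degvec B $ k)" using False d_pos by (intro sum_pos) auto
  ultimately have c0: "c = 0" by simp
  \<comment> \<open>So \<open>x\<close> is harmonic, hence constant, and \<open>c = h \<bullet> x\<close> is that constant.\<close>
  have const: "x k = x 0" if "k < n" for k
    using G Bx c0 that False by (intro connected_harmonic_const) auto
  have "c = (\<Sum>l<n. h $ l * x 0)" unfolding c_def by (intro sum.cong refl) (metis const lessThan_iff)
  also have "\<dots> = x 0" using h by (simp add: scalar_prod_def ones_def lessThan_atLeast0 sum_distrib_right[symmetric])
  finally have "x k = 0" if "k < n" for k using c0 const[OF that] by simp
  then show ?thesis using v(1) by (intro eq_vecI) (auto simp: x_def)
qed

lemma perturbed_laplacian_inverse:
  assumes G: "connected_weighted_graph n B" and h: "h \<in> carrier_vec n" "h \<bullet> ones n = 1"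
  defines "M \<equiv> perturbed_laplacian (trans_mat B) h"
  shows "M \<in> carrier_mat n n" "mat_inv M \<in> carrier_mat n n" "M * mat_inv M = 1\<^sub>m n"
proof -
  show M: "M \<in> carrier_mat n n"
    using G h unfolding M_def
    by (auto simp: connected_weighted_graph_def trans_mat_carrier perturbed_laplacian_carrier)
  have "det M \<noteq> 0"
  proof
    assume "det M = 0"
    then obtain v where "v \<in> carrier_vec n" "v \<noteq> 0\<^sub>v n" "M *\<^sub>v v = 0\<^sub>v n"
      using det_0_iff_vec_prod_zero_field[OF M] by blast
    with perturbed_laplacian_kernel_trivial[OF G h] show False unfolding M_def by blast
  qed
  then show "mat_inv M \<in> carrier_mat n n" "M * mat_inv M = 1\<^sub>m n"
    using mat_inv_correct[OF M] by auto
qed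

lemma kemeny_eq_trace_fundamental:
  assumes G: "connected_weighted_graph n B" and h: "h \<in> carrier_vec n" "h \<bullet> ones n = 1"
    and n: "0 < n"
  shows "kemeny (trans_mat B)
    = complex_of_real (trace_mat (mat_inv (perturbed_laplacian (trans_mat B) h))) - 1"
proof -
  let ?c = "map_mat complex_of_real"
  define Q where "Q = trans_mat B"
  define Z where "Z = mat_inv (perturbed_laplacian Q h)"
  have B: "B \<in> carrier_mat n n" and d_pos: "\<And>k. k < n \<Longrightarrow> 0 < degvec B $ k"
    using G by (auto simp: connected_weighted_graph_def)
  have Q: "Q \<in> carrier_mat n n" using B by (simp add: Q_def trans_mat_carrier)
  have Z: "Z \<in> carrier_mat n n" "perturbed_laplacian Q h * Z = 1\<^sub>m n"
    using perturbed_laplacian_inverse[OF G h] unfolding Q_def Z_def by auto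
  have M: "perturbed_laplacian Q h \<in> carrier_mat n n" using Q h(1) by (rule perturbed_laplacian_carrier)
  have "mat n n (\<lambda>(k,l). (if k = l then 1 else 0) - ?c Q $$ (k,l) + complex_of_real (h $ l))
      = ?c (perturbed_laplacian Q h)"
    using Q h(1) carrier_matD[OF M] by (intro eq_matI) (auto simp: perturbed_laplacian_index)
  then have "mat n n (\<lambda>(k,l). (if k = l then 1 else 0) - ?c Q $$ (k,l) + complex_of_real (h $ l)) * ?c Z
      = ?c (perturbed_laplacian Q h) * ?c Z" by simp
  also have "\<dots> = ?c (perturbed_laplacian Q h * Z)"
    by (rule of_real_hom.mat_hom_mult[OF M Z(1), symmetric])
  also have "\<dots> = 1\<^sub>m n" unfolding Z(2) by (rule of_real_hom.mat_hom_one)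
  finally have "mat n n (\<lambda>(k,l). (if k = l then 1 else 0) - ?c Q $$ (k,l) + complex_of_real (h $ l))
      * ?c Z = 1\<^sub>m n" .
  moreover have "(\<Sum>l<n. ?c Q $$ (k,l)) = 1" if "k < n" for k
    using that Q B d_pos[OF that] by (simp add: Q_def flip: of_real_sum) (simp add: trans_mat_row_sum)
  moreover have "(\<Sum>l<n. complex_of_real (h $ l)) = 1"
    using h by (simp add: scalar_prod_def ones_def lessThan_atLeast0 flip: of_real_sum)
  ultimately have "kemeny Q = mat_trace (?c Z) - 1"
    unfolding kemeny_def using Q Z(1) n by (intro sum_reciprocal_one_minus_roots_eq_trace) auto
  then show ?thesis
    using Z(1) by (simp add: Q_def Z_def mat_trace_of_real trace_mat_eq_mat_trace)
qed

section \<open>Low-rank updates of an inverse\<close>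

context
  fixes n m :: nat
begin

private lemmas carrier_nm = mult_carrier_mat[of _ n n _ n] mult_carrier_mat[of _ n n _ m]
  mult_carrier_mat[of _ n m _ n] mult_carrier_mat[of _ n m _ m] mult_carrier_mat[of _ m n _ n]
  mult_carrier_mat[of _ m n _ m] mult_carrier_mat[of _ m m _ n] mult_carrier_mat[of _ m m _ m]

private lemmas assoc_nm = assoc_mult_mat[of _ n n _ n _ n] assoc_mult_mat[of _ n n _ n _ m]
  assoc_mult_mat[of _ n n _ m _ n] assoc_mult_mat[of _ n n _ m _ m]
  assoc_mult_mat[of _ n m _ n _ n] assoc_mult_mat[of _ n m _ n _ m]
  assoc_mult_mat[of _ n m _ m _ n] assoc_mult_mat[of _ n m _ m _ m]
  assoc_mult_mat[of _ m n _ n _ n] assoc_mult_mat[of _ m n _ n _ m]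
  assoc_mult_mat[of _ m n _ m _ n] assoc_mult_mat[of _ m n _ m _ m]
  assoc_mult_mat[of _ m m _ n _ n] assoc_mult_mat[of _ m m _ n _ m]
  assoc_mult_mat[of _ m m _ m _ n] assoc_mult_mat[of _ m m _ m _ m]

lemma woodbury_capacitance_inverse:
  fixes M Mh Z Zh U V :: "'a::field mat"
  assumes M: "M \<in> carrier_mat n n" and Z: "Z \<in> carrier_mat n n"
    and Mh: "Mh \<in> carrier_mat n n" and Zh: "Zh \<in> carrier_mat n n"
    and U: "U \<in> carrier_mat n m" and V: "V \<in> carrier_mat m n"
    and ZM: "Z * M = 1\<^sub>m n" and MhZh: "Mh * Zh = 1\<^sub>m n"
    and Mhe: "Mh = M - U * V"
  shows "(1\<^sub>m m - V * Z * U) * (1\<^sub>m m + V * Zh * U) = 1\<^sub>m m"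
proof -
  have UV: "U * V = M - Mh"
  proof -
    have c: "U * V \<in> carrier_mat n n" using U V by simp
    show ?thesis unfolding Mhe by (rule eq_matI) (use c M in auto)
  qed
  have K1: "Z * (U * (V * Zh)) = Zh - Z"
  proof -
    have "Z * (U * (V * Zh)) = Z * ((U * V) * Zh)" using U V Zh Z by (simp add: assoc_nm carrier_nm)
    also have "\<dots> = Z * (M * Zh - Mh * Zh)" unfolding UV using M Mh Zh by (simp add: minus_mult_distrib_mat[of _ n n])
    also have "\<dots> = Z * (M * Zh) - Z * 1\<^sub>m n" unfolding MhZh using M Zh Z by (subst mult_minus_distrib_mat[of Z n n]) auto
    also have "Z * (M * Zh) = Zh" using Z M Zh ZM by (simp add: assoc_nm carrier_nm flip: assoc_mult_mat[of Z n n M n Zh n])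
    finally show ?thesis using Z by simp
  qed
  define G where "G = V * Z * U"
  define H where "H = V * Zh * U"
  have Gc: "G \<in> carrier_mat m m" and Hc: "H \<in> carrier_mat m m" using U V Z Zh by (simp_all add: G_def H_def carrier_nm)
  have GH: "G * H = H - G"
  proof -
    have "G * H = V * ((Z * (U * (V * Zh))) * U)" unfolding G_def H_def using U V Z Zh by (simp add: assoc_nm carrier_nm)
    also have "\<dots> = V * ((Zh - Z) * U)" by (simp add: K1)
    also have "\<dots> = V * (Zh * U - Z * U)" using U Zh Z by (simp add: minus_mult_distrib_mat[of _ n n])
    also have "\<dots> = V * (Zh * U) - V * (Z * U)" using U Zh Z V by (intro mult_minus_distrib_mat[of _ m n _ m]) (auto simp: carrier_nm)
    also have "\<dots> = H - G" unfolding G_def H_def using U Zh Z V by (simp add: assoc_nm carrier_nm)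
    finally show ?thesis .
  qed
  have "(1\<^sub>m m - G) * (1\<^sub>m m + H) = (1\<^sub>m m - G) * 1\<^sub>m m + (1\<^sub>m m - G) * H"
    using Gc Hc by (intro mult_add_distrib_mat[of _ m m _ m]) auto
  also have "\<dots> = (1\<^sub>m m - G) + (H - G * H)"
    using Gc Hc by (simp add: minus_mult_distrib_mat[of _ m m])
  also have "\<dots> = 1\<^sub>m m" unfolding GH by (rule eq_matI) (use Gc Hc in auto)
  finally show ?thesis unfolding G_def H_def .
qed

lemma woodbury_correction:
  fixes M Z Wi U V :: "'a::field mat"
  assumes M: "M \<in> carrier_mat n n" and Z: "Z \<in> carrier_mat n n"
    and U: "U \<in> carrier_mat n m" and V: "V \<in> carrier_mat m n" and Wi: "Wi \<in> carrier_mat m m"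
    and MZ: "M * Z = 1\<^sub>m n" and WWi: "(1\<^sub>m m - V * Z * U) * Wi = 1\<^sub>m m"
  shows "(M - U * V) * (Z * U * Wi * V * Z) = U * (V * Z)"
proof -
  define G where "G = V * Z * U"
  define T where "T = Wi * (V * Z)"
  define R where "R = Z * U * Wi * V * Z"
  have Gc: "G \<in> carrier_mat m m" using U V Z by (simp add: G_def carrier_nm)
  have Tc: "T \<in> carrier_mat m n" using Wi V Z by (simp add: T_def carrier_nm)
  have Rc: "R \<in> carrier_mat n n" using Wi V Z U by (simp add: R_def carrier_nm)
  have UVc: "U * V \<in> carrier_mat n n" using U V by (simp add: carrier_nm)
  have VZc: "V * Z \<in> carrier_mat m n" using V Z by (simp add: carrier_nm)
  have MR: "M * R = U * T"
  proof -
    have "M * R = (M * Z) * (U * T)" unfolding R_def T_def using M Z U V Wi by (simp add: assoc_nm carrier_nm)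
    then show ?thesis using MZ U Tc by (simp add: carrier_nm)
  qed
  have UVR: "(U * V) * R = U * (G * T)" unfolding R_def T_def G_def using M Z U V Wi by (simp add: assoc_nm carrier_nm)
  have GT: "T - G * T = V * Z"
  proof -
    have "T - G * T = (Wi - G * Wi) * (V * Z)" unfolding T_def using Gc Wi VZc
      by (simp add: minus_mult_distrib_mat[of _ m m _ _ n] assoc_nm carrier_nm)
    also have "Wi - G * Wi = (1\<^sub>m m - G) * Wi" using Gc Wi by (simp add: minus_mult_distrib_mat[of _ m m _ _ m])
    also have "\<dots> = 1\<^sub>m m" using WWi unfolding G_def .
    finally show ?thesis using VZc by (simp add: left_mult_one_mat)
  qed
  have "(M - U * V) * R = M * R - (U * V) * R" using M UVc Rc by (simp add: minus_mult_distrib_mat[of _ n n _ _ n])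
  also have "\<dots> = U * T - U * (G * T)" unfolding MR UVR ..
  also have "\<dots> = U * (T - G * T)" using U Tc Gc by (simp add: mult_minus_distrib_mat[of _ n m _ n] carrier_nm)
  finally show ?thesis unfolding GT R_def .
qed

lemma woodbury_right_inverse:
  fixes M Mh Z Wi U V :: "'a::field mat"
  assumes M: "M \<in> carrier_mat n n" and Z: "Z \<in> carrier_mat n n"
    and U: "U \<in> carrier_mat n m" and V: "V \<in> carrier_mat m n" and Wi: "Wi \<in> carrier_mat m m"
    and MZ: "M * Z = 1\<^sub>m n" and WWi: "(1\<^sub>m m - V * Z * U) * Wi = 1\<^sub>m m"
    and Mhe: "Mh = M - U * V"
  shows "Mh * (Z + Z * U * Wi * V * Z) = 1\<^sub>m n"
proof -
  have UVc: "U * V \<in> carrier_mat n n" and VZc: "V * Z \<in> carrier_mat m n"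
    and Rc: "Z * U * Wi * V * Z \<in> carrier_mat n n"
    using U V Z Wi by (simp_all add: carrier_nm)
  have "Mh * Z = M * Z - (U * V) * Z" unfolding Mhe using M UVc Z by (simp add: minus_mult_distrib_mat[of _ n n _ _ n])
  then have MhZ: "Mh * Z = 1\<^sub>m n - U * (V * Z)" using MZ U V Z by (simp add: assoc_nm carrier_nm)
  have "Mh * (Z + Z * U * Wi * V * Z) = Mh * Z + Mh * (Z * U * Wi * V * Z)"
    using Z Rc Mhe M UVc by (intro mult_add_distrib_mat[of _ n n _ n]) (auto simp: minus_carrier_mat)
  also have "Mh * (Z * U * Wi * V * Z) = U * (V * Z)"
    unfolding Mhe by (rule woodbury_correction[OF M Z U V Wi MZ WWi])
  also have "Mh * Z + U * (V * Z) = 1\<^sub>m n"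
    unfolding MhZ by (rule eq_matI) (use U VZc in \<open>auto simp: carrier_nm\<close>)
  finally show ?thesis .
qed
end

lemma mat_trace_woodbury_term:
  fixes Z U W V :: "'a::field mat"
  assumes Z: "Z \<in> carrier_mat n n" and U: "U \<in> carrier_mat n m" and V: "V \<in> carrier_mat m n"
    and W: "W \<in> carrier_mat m m"
  shows "mat_trace (Z * U * W * V * Z) = mat_trace (W * V * Z * Z * U)"
proof -
  have "Z * U * W * V * Z = (Z * U) * (W * V) * Z"
    using Z U V W assoc_mult_mat[of "Z * U" n m W m V n] by simp
  also have "\<dots> = (Z * U) * (W * V * Z)"
    using Z U V W assoc_mult_mat[of "Z * U" n m "W * V" n Z n] by simp
  moreover have "W * V * Z * Z * U = (W * V * Z) * (Z * U)"
    using Z U V W assoc_mult_mat[of "W * V * Z" m n Z n U m] by simp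
  ultimately show ?thesis using Z U V W by (simp add: mat_trace_mult_comm[of "Z * U" n m])
qed

lemma low_rank_update_inverse:
  fixes M Z Mh Zh U V :: "'a::field mat"
  assumes M: "M \<in> carrier_mat n n" and Z: "Z \<in> carrier_mat n n"
    and Mh: "Mh \<in> carrier_mat n n" and Zh: "Zh \<in> carrier_mat n n"
    and U: "U \<in> carrier_mat n m" and V: "V \<in> carrier_mat m n"
    and MZ: "M * Z = 1\<^sub>m n" and MhZh: "Mh * Zh = 1\<^sub>m n" and Mh_eq: "Mh = M - U * V"
  defines "W \<equiv> 1\<^sub>m m - V * Z * U" and "W' \<equiv> 1\<^sub>m m + V * Zh * U"
  shows "W * W' = 1\<^sub>m m" "W' * W = 1\<^sub>m m"
    and "mat_trace Zh = mat_trace Z + mat_trace (W' * V * Z * Z * U)"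
proof -
  have Wc: "W \<in> carrier_mat m m" and W'c: "W' \<in> carrier_mat m m"
    using U V Z Zh by (simp_all add: W_def W'_def minus_carrier_mat)
  have ZM: "Z * M = 1\<^sub>m n" by (rule mat_mult_left_right_inverse[OF M Z MZ])
  have ZhMh: "Zh * Mh = 1\<^sub>m n" by (rule mat_mult_left_right_inverse[OF Mh Zh MhZh])
  show WW': "W * W' = 1\<^sub>m m"
    unfolding W_def W'_def by (rule woodbury_capacitance_inverse[OF M Z Mh Zh U V ZM MhZh Mh_eq])
  show "W' * W = 1\<^sub>m m" by (rule mat_mult_left_right_inverse[OF Wc W'c WW'])
  define R where "R = Z * U * W' * V * Z"
  have Rc: "R \<in> carrier_mat n n"
    unfolding R_def by (rule mult_carrier_mat[OF mult_carrier_mat[OF mult_carrier_mat[OF mult_carrier_mat[OF Z U] W'c] V] Z])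
  have right_inv: "Mh * (Z + R) = 1\<^sub>m n"
    unfolding R_def by (rule woodbury_right_inverse[OF M Z U V W'c MZ _ Mh_eq]) (use WW' in \<open>simp add: W_def\<close>)
  have "Zh = Zh * (Mh * (Z + R))" using Zh by (simp add: right_inv)
  also have "\<dots> = (Zh * Mh) * (Z + R)"
    using Zh Mh Z Rc by (simp add: assoc_mult_mat[of Zh n n Mh n "Z + R" n])
  also have "\<dots> = Z + R" using ZhMh Z Rc by simp
  finally have "Zh = Z + R" .
  then have "mat_trace Zh = mat_trace Z + mat_trace R" using Z Rc by (simp add: mat_trace_add)
  then show "mat_trace Zh = mat_trace Z + mat_trace (W' * V * Z * Z * U)"
    using mat_trace_woodbury_term[OF Z U V W'c] by (simp add: R_def)
qed

section \<open>Removing an edge\<close>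

lemma remove_edge_carrier: "A \<in> carrier_mat n n \<Longrightarrow> remove_edge A i j \<in> carrier_mat n n"
  unfolding remove_edge_def by (simp add: outer_def minus_carrier_mat)

lemma remove_edge_index:
  assumes "A \<in> carrier_mat n n" "k < n" "l < n" "i < n" "j < n"
  shows "remove_edge A i j $$ (k,l) = A $$ (k,l)
     - (if k = i then (if l = j then A $$ (i,j) else 0) else 0)
     - (if k = j then (if l = i then A $$ (i,j) else 0) else 0)"
  using assms unfolding remove_edge_def by (auto simp: outer_def)

lemma degvec_remove_edge:
  assumes A: "A \<in> carrier_mat n n" and ij: "i < n" "j < n" "i \<noteq> j" and k: "k < n"
  shows "degvec (remove_edge A i j) $ k
    = degvec A $ k - (if k = i then A $$ (i,j) else 0) - (if k = j then A $$ (i,j) else 0)"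
proof -
  have "degvec (remove_edge A i j) $ k = (\<Sum>l<n. remove_edge A i j $$ (k,l))"
    by (rule degvec_index[OF remove_edge_carrier[OF A] k])
  also have "\<dots> = (\<Sum>l<n. A $$ (k,l)
      - (if k = i then (if l = j then A $$ (i,j) else 0) else 0)
      - (if k = j then (if l = i then A $$ (i,j) else 0) else 0))"
    using A ij k by (intro sum.cong refl) (simp add: remove_edge_index)
  also have "\<dots> = degvec A $ k - (if k = i then A $$ (i,j) else 0) - (if k = j then A $$ (i,j) else 0)"
    using A ij k by (simp add: sum_subtractf degvec_index)
  finally show ?thesis .
qed

lemma pow_mat_zero_row:
  fixes Q :: "real mat"
  assumes Q: "Q \<in> carrier_mat n n" and zero: "\<forall>l<n. Q $$ (i,l) = 0" and i: "i < n"
  shows "l < n \<Longrightarrow> (Q ^\<^sub>m Suc m) $$ (i,l) = 0"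
proof (induction m arbitrary: l)
  case 0
  then show ?case using Q zero by simp
next
  case (Suc m)
  have "(Q ^\<^sub>m Suc (Suc m)) $$ (i,l) = (\<Sum>r<n. (Q ^\<^sub>m Suc m) $$ (i,r) * Q $$ (r,l))"
    using Q Suc.prems i by (simp only: pow_mat.simps(2)[of Q "Suc m"]) (rule index_mult_mat_sum, auto)
  also have "\<dots> = 0" using Suc.IH by (intro sum.neutral) auto
  finally show ?case .
qed

lemma irreducible_trans_mat_degvec_pos:
  fixes B :: "real mat"
  assumes B: "B \<in> carrier_mat n n" "\<forall>k<n. \<forall>l<n. 0 \<le> B $$ (k,l)"
    and irr: "irreducible_mat (trans_mat B)" and ij: "i < n" "j < n" "i \<noteq> j"
  shows "0 < degvec B $ i"
proof (rule ccontr)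
  assume "\<not> 0 < degvec B $ i"
  moreover have "0 \<le> degvec B $ i" using B ij by (auto simp: degvec_index intro!: sum_nonneg)
  ultimately have "degvec B $ i = 0" by simp
  then have zero: "\<forall>l<n. trans_mat B $$ (i,l) = 0" using B(1) ij(1) by (simp add: trans_mat_index)
  have Q: "trans_mat B \<in> carrier_mat n n" using B(1) by (rule trans_mat_carrier)
  have "\<forall>k<n. \<forall>l<n. \<exists>m. 0 < (trans_mat B ^\<^sub>m m) $$ (k,l)"
    using irr Q by (simp add: irreducible_mat_def)
  then obtain m where m: "0 < (trans_mat B ^\<^sub>m m) $$ (i,j)" using ij by blast
  show False
  proof (cases m)
    case 0
    then show False using m Q ij by simp
  next
    case (Suc m')
    then show False using m pow_mat_zero_row[OF Q zero ij(1,2), of m'] by simp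
  qed
qed

lemma connected_weighted_graph_remove_edge:
  assumes G: "connected_weighted_graph n A" and ij: "i < n" "j < n" "i \<noteq> j"
    and not_cut: "\<not> cut_edge A i j"
  shows "connected_weighted_graph n (remove_edge A i j)"
proof -
  let ?Ah = "remove_edge A i j"
  have A: "A \<in> carrier_mat n n" "transpose_mat A = A" "\<forall>k<n. \<forall>l<n. 0 \<le> A $$ (k,l)"
    and d_pos: "\<forall>k<n. 0 < degvec A $ k"
    using G by (auto simp: connected_weighted_graph_def)
  have Ah: "?Ah \<in> carrier_mat n n" using A(1) by (rule remove_edge_carrier)
  have aji: "A $$ (j,i) = A $$ (i,j)" using A(1,2) ij by (intro symmetric_mat_index) auto
  have "transpose_mat ?Ah = ?Ah"
  proof (rule eq_matI)
    fix k l assume "k < dim_row ?Ah" "l < dim_col ?Ah"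
    then have kl: "k < n" "l < n" using Ah by auto
    then show "transpose_mat ?Ah $$ (k,l) = ?Ah $$ (k,l)"
      using Ah ij aji remove_edge_index[OF A(1) kl ij(1,2)] remove_edge_index[OF A(1) kl(2,1) ij(1,2)]
        symmetric_mat_index[OF A(1,2) kl]
      by auto
  qed (use Ah in auto)
  moreover have "\<forall>k<n. \<forall>l<n. 0 \<le> ?Ah $$ (k,l)"
  proof (intro allI impI)
    fix k l assume kl: "k < n" "l < n"
    then show "0 \<le> ?Ah $$ (k,l)"
      using A(3) ij aji remove_edge_index[OF A(1) kl ij(1,2)] by auto
  qed
  moreover have irr: "irreducible_mat (trans_mat ?Ah)"
    using not_cut by (simp add: cut_edge_def connected_graph_def)
  moreover have "0 < degvec ?Ah $ k" if k: "k < n" for k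
  proof (cases "k = i \<or> k = j")
    case True
    then show ?thesis
      using irreducible_trans_mat_degvec_pos[OF Ah calculation(2) irr, of i j]
        irreducible_trans_mat_degvec_pos[OF Ah calculation(2) irr, of j i] ij
      by blast
  next
    case False
    then show ?thesis using degvec_remove_edge[OF A(1) ij k] d_pos k by simp
  qed
  ultimately show ?thesis
    using Ah unfolding connected_weighted_graph_def connected_graph_def by blast
qed

lemma non_cut_edge_weight_lt_degree:
  assumes G: "connected_weighted_graph n A" and ij: "i < n" "j < n" "i \<noteq> j"
    and not_cut: "\<not> cut_edge A i j"
  shows "A $$ (i,j) < degvec A $ i" "A $$ (i,j) < degvec A $ j"
proof -
  have "0 < degvec (remove_edge A i j) $ i" "0 < degvec (remove_edge A i j) $ j"
    using connected_weighted_graph_remove_edge[OF G ij not_cut] ij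
    by (auto simp: connected_weighted_graph_def)
  moreover have "A \<in> carrier_mat n n" using G by (simp add: connected_weighted_graph_def)
  ultimately show "A $$ (i,j) < degvec A $ i" "A $$ (i,j) < degvec A $ j"
    using degvec_remove_edge[of A n i j] ij by auto
qed

definition edge_cols :: "nat \<Rightarrow> nat \<Rightarrow> nat \<Rightarrow> real mat" where
  "edge_cols n i j = mat_of_cols n [unit_vec n i, unit_vec n j]"

definition edge_rows :: "real mat \<Rightarrow> nat \<Rightarrow> nat \<Rightarrow> real mat" where
  "edge_rows A i j =
    (let n = dim_row A; d = degvec A; a = A $$ (i,j)
     in mat_of_rows_list 2 [[a / (d $ i * (d $ i - a)), 0], [0, a / (d $ j * (d $ j - a))]]
          * (transpose_mat (edge_cols n i j) * A)
        - a \<cdot>\<^sub>m (mat_of_rows_list 2 [[0, inverse (d $ i - a)], [inverse (d $ j - a), 0]]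
          * transpose_mat (edge_cols n i j)))"

lemma edge_cols_carrier: "edge_cols n i j \<in> carrier_mat n 2"
  using mat_of_cols_carrier(1)[of n "[unit_vec n i, unit_vec n j]"]
  by (simp add: edge_cols_def numeral_2_eq_2)

lemma edge_cols_index:
  "k < n \<Longrightarrow> r < 2 \<Longrightarrow> i < n \<Longrightarrow> j < n \<Longrightarrow>
    edge_cols n i j $$ (k,r) = (if r = 0 then (if k = i then 1 else 0) else (if k = j then 1 else 0))"
  by (auto simp: edge_cols_def mat_of_cols_index less_2_cases_iff)

lemma sum_less_2: "(\<Sum>r<2. f r) = f 0 + f (1::nat)"
  by (simp add: numeral_2_eq_2)

lemma edge_cols_mult_index:
  assumes "B \<in> carrier_mat 2 nc" "k < n" "l < nc" "i < n" "j < n"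
  shows "(edge_cols n i j * B) $$ (k,l) = (if k = i then B $$ (0,l) else 0) + (if k = j then B $$ (1,l) else 0)"
proof -
  have "(edge_cols n i j * B) $$ (k,l) = (\<Sum>r<2. edge_cols n i j $$ (k,r) * B $$ (r,l))"
    using assms edge_cols_carrier by (intro index_mult_mat_sum) auto
  then show ?thesis using assms by (simp add: sum_less_2 edge_cols_index)
qed

lemma transpose_edge_cols_mult_index:
  assumes "B \<in> carrier_mat n nc" "r < 2" "l < nc" "i < n" "j < n"
  shows "(transpose_mat (edge_cols n i j) * B) $$ (r,l) = (if r = 0 then B $$ (i,l) else B $$ (j,l))"
proof -
  have "(transpose_mat (edge_cols n i j) * B) $$ (r,l) = (\<Sum>k<n. transpose_mat (edge_cols n i j) $$ (r,k) * B $$ (k,l))"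
    using assms edge_cols_carrier by (intro index_mult_mat_sum) auto
  also have "\<dots> = (\<Sum>k<n. edge_cols n i j $$ (k,r) * B $$ (k,l))"
    using assms edge_cols_carrier[of n i j] by (intro sum.cong refl) auto
  also have "\<dots> = (\<Sum>k<n. if k = (if r = 0 then i else j) then B $$ (k,l) else 0)"
    using assms by (intro sum.cong refl) (simp add: edge_cols_index)
  finally show ?thesis using assms by simp
qed

lemma mat_of_rows_list_2_carrier: "mat_of_rows_list 2 [[a, b], [c, e]] \<in> carrier_mat 2 2"
proof -
  have "length [[a, b], [c, e]] = 2" by simp
  then show ?thesis unfolding mat_of_rows_list_def by (metis mat_carrier)
qed

lemma edge_rows_carrier: "A \<in> carrier_mat n n \<Longrightarrow> edge_rows A i j \<in> carrier_mat 2 n"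
  using edge_cols_carrier[of n i j] unfolding edge_rows_def Let_def
  by (intro minus_carrier_mat smult_carrier_mat mult_carrier_mat[OF mat_of_rows_list_2_carrier]) simp

lemma edge_rows_index:
  assumes A: "A \<in> carrier_mat n n" and ij: "i < n" "j < n" and r: "r < 2" and l: "l < n"
  defines "a \<equiv> A $$ (i,j)" and "d \<equiv> degvec A"
  shows "edge_rows A i j $$ (r,l) = (if r = 0
      then a / (d $ i * (d $ i - a)) * A $$ (i,l) - a * (inverse (d $ i - a) * (if l = j then 1 else 0))
      else a / (d $ j * (d $ j - a)) * A $$ (j,l) - a * (inverse (d $ j - a) * (if l = i then 1 else 0)))"
proof -
  define D where "D = mat_of_rows_list 2 [[a / (d $ i * (d $ i - a)), 0], [0, a / (d $ j * (d $ j - a))]]"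
  define E where "E = mat_of_rows_list 2 [[0, inverse (d $ i - a)], [inverse (d $ j - a), 0]]"
  let ?U = "edge_cols n i j"
  have DE: "D \<in> carrier_mat 2 2" "E \<in> carrier_mat 2 2" by (auto simp: D_def E_def mat_of_rows_list_def)
  have U: "?U \<in> carrier_mat n 2" by (rule edge_cols_carrier)
  have "edge_rows A i j = D * (transpose_mat ?U * A) - a \<cdot>\<^sub>m (E * transpose_mat ?U)"
    using A by (simp add: edge_rows_def Let_def D_def E_def a_def d_def)
  also have "\<dots> $$ (r,l) = (D * (transpose_mat ?U * A)) $$ (r,l) - a * (E * transpose_mat ?U) $$ (r,l)"
    using DE U A r l by simp
  also have "(D * (transpose_mat ?U * A)) $$ (r,l) = (\<Sum>q<2. D $$ (r,q) * (transpose_mat ?U * A) $$ (q,l))"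
    using DE U A r l by (intro index_mult_mat_sum) auto
  also have "(E * transpose_mat ?U) $$ (r,l) = (\<Sum>q<2. E $$ (r,q) * transpose_mat ?U $$ (q,l))"
    using DE U r l by (intro index_mult_mat_sum) auto
  also have "(\<Sum>q<2. D $$ (r,q) * (transpose_mat ?U * A) $$ (q,l))
      = D $$ (r,0) * A $$ (i,l) + D $$ (r,1) * A $$ (j,l)"
    using A l ij by (simp add: sum_less_2 transpose_edge_cols_mult_index)
  also have "(\<Sum>q<2. E $$ (r,q) * transpose_mat ?U $$ (q,l))
      = E $$ (r,0) * (if l = i then 1 else 0) + E $$ (r,1) * (if l = j then 1 else 0)"
    using U l ij by (simp add: sum_less_2 edge_cols_index)
  finally show ?thesis
    using r by (auto simp: D_def E_def mat_of_rows_list_def less_2_cases_iff)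
qed

text \<open>Row \<open>i\<close> of \<open>P\<^sup>^\<close> in terms of row \<open>i\<close> of \<open>P\<close>; \<open>b\<close> marks the removed entry.\<close>

lemma removed_row_normalization:
  fixes x a dd :: real
  assumes "0 < dd" "0 < dd - a" and "b \<longrightarrow> x = a"
  shows "(x - (if b then a else 0)) / (dd - a)
    = x / dd + a / (dd * (dd - a)) * x - a * (inverse (dd - a) * (if b then 1 else 0))"
proof (cases b)
  case True
  have "a / dd + a / (dd * (dd - a)) * a - a * inverse (dd - a)
      = (a * (dd - a) + a * a - a * dd) / (dd * (dd - a))"
    using assms by (simp add: field_simps)
  also have "\<dots> = 0" by (simp add: algebra_simps)
  finally show ?thesis using True assms(3) by simp
next
  case False
  have "x / dd + a / (dd * (dd - a)) * x = (x * (dd - a) + a * x) / (dd * (dd - a))"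
    using assms by (simp add: field_simps)
  also have "\<dots> = x / (dd - a)" using assms by (simp add: field_simps)
  finally show ?thesis using False by simp
qed

lemma trans_mat_remove_edge_index:
  assumes G: "connected_weighted_graph n A" and ij: "i < n" "j < n" "i \<noteq> j"
    and lt: "A $$ (i,j) < degvec A $ i" "A $$ (i,j) < degvec A $ j" and kl: "k < n" "l < n"
  shows "trans_mat (remove_edge A i j) $$ (k,l)
    = trans_mat A $$ (k,l) + (edge_cols n i j * edge_rows A i j) $$ (k,l)"
proof -
  define a where "a = A $$ (i,j)"
  have A: "A \<in> carrier_mat n n" "transpose_mat A = A" and d_pos: "\<forall>k<n. 0 < degvec A $ k"
    using G by (auto simp: connected_weighted_graph_def)
  have aji: "A $$ (j,i) = a" using A ij by (simp add: a_def symmetric_mat_index)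
  have Ah_kl: "trans_mat (remove_edge A i j) $$ (k,l) = (A $$ (k,l)
      - (if k = i then (if l = j then a else 0) else 0) - (if k = j then (if l = i then a else 0) else 0))
      / (degvec A $ k - (if k = i then a else 0) - (if k = j then a else 0))"
    using kl by (simp add: trans_mat_index[OF remove_edge_carrier[OF A(1)] kl] remove_edge_index[OF A(1) kl ij(1,2)]
        degvec_remove_edge[OF A(1) ij kl(1)] a_def)
  have P_kl: "trans_mat A $$ (k,l) = A $$ (k,l) / degvec A $ k" by (rule trans_mat_index[OF A(1) kl])
  have UV_kl: "(edge_cols n i j * edge_rows A i j) $$ (k,l) = (if k = i then edge_rows A i j $$ (0,l) else 0)
      + (if k = j then edge_rows A i j $$ (1,l) else 0)"
    using edge_rows_carrier[OF A(1)] kl ij(1,2) by (rule edge_cols_mult_index)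
  note V_l = edge_rows_index[OF A(1) ij(1,2) _ kl(2), folded a_def]
  consider "k = i" | "k = j" | "k \<noteq> i" "k \<noteq> j" by blast
  then show ?thesis
  proof cases
    case 1
    then have "trans_mat (remove_edge A i j) $$ (k,l) = (A $$ (i,l) - (if l = j then a else 0)) / (degvec A $ i - a)"
      using Ah_kl ij(3) by simp
    also have "\<dots> = A $$ (i,l) / degvec A $ i + a / (degvec A $ i * (degvec A $ i - a)) * A $$ (i,l)
        - a * (inverse (degvec A $ i - a) * (if l = j then 1 else 0))"
      using d_pos ij lt by (intro removed_row_normalization) (auto simp: a_def)
    finally show ?thesis unfolding P_kl UV_kl using 1 ij(3) by (simp add: V_l)
  next
    case 2
    then have "trans_mat (remove_edge A i j) $$ (k,l) = (A $$ (j,l) - (if l = i then a else 0)) / (degvec A $ j - a)"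
      using Ah_kl ij(3) by simp
    also have "\<dots> = A $$ (j,l) / degvec A $ j + a / (degvec A $ j * (degvec A $ j - a)) * A $$ (j,l)
        - a * (inverse (degvec A $ j - a) * (if l = i then 1 else 0))"
      using d_pos ij lt aji by (intro removed_row_normalization) (auto simp: a_def)
    finally show ?thesis unfolding P_kl UV_kl using 2 ij(3) by (simp add: V_l)
  next
    case 3
    then show ?thesis using Ah_kl P_kl UV_kl by simp
  qed
qed

lemma trans_mat_remove_edge:
  assumes G: "connected_weighted_graph n A" and ij: "i < n" "j < n" "i \<noteq> j"
    and lt: "A $$ (i,j) < degvec A $ i" "A $$ (i,j) < degvec A $ j"
  shows "trans_mat (remove_edge A i j) = trans_mat A + edge_cols n i j * edge_rows A i j"
proof -
  let ?UV = "edge_cols n i j * edge_rows A i j"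
  have A: "A \<in> carrier_mat n n" using G by (simp add: connected_weighted_graph_def)
  have UV: "?UV \<in> carrier_mat n n" using edge_cols_carrier edge_rows_carrier[OF A] by (rule mult_carrier_mat)
  have Q: "trans_mat A \<in> carrier_mat n n" "trans_mat (remove_edge A i j) \<in> carrier_mat n n"
    using A by (simp_all add: trans_mat_carrier remove_edge_carrier)
  show ?thesis
  proof (rule eq_matI)
    fix k l assume "k < dim_row (trans_mat A + ?UV)" "l < dim_col (trans_mat A + ?UV)"
    then have kl: "k < n" "l < n" using Q UV by auto
    then have "(trans_mat A + ?UV) $$ (k,l) = trans_mat A $$ (k,l) + ?UV $$ (k,l)"
      using UV by (intro index_add_mat(1)) auto
    then show "trans_mat (remove_edge A i j) $$ (k,l) = (trans_mat A + ?UV) $$ (k,l)"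
      using trans_mat_remove_edge_index[OF G ij lt kl] by simp
  qed (use Q UV in auto)
qed

theorem theorem4:
  fixes A :: "real mat" and n i j :: nat and h :: "real vec"
  assumes A_carrier: "A \<in> carrier_mat n n"
    and A_sym: "transpose_mat A = A"
    and A_nonneg: "\<forall>k < n. \<forall>l < n. A $$ (k,l) \<ge> 0"
    and d_pos: "\<forall>k < n. degvec A $ k > 0"
    and conn: "connected_graph A"
    and ij: "i < n" "j < n" "i \<noteq> j"
    and aij_pos: "A $$ (i,j) > 0"
    and not_cut: "\<not> cut_edge A i j"
    and h_dim: "h \<in> carrier_vec n"
    and h_sum: "h \<bullet> ones n = 1"
  defines "d \<equiv> degvec A"
  defines "P \<equiv> trans_mat A"
    and "Ph \<equiv> trans_mat (remove_edge A i j)"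
    and "U \<equiv> mat_of_cols n [unit_vec n i, unit_vec n j]"
    and "s_i \<equiv> A $$ (i,j) / (d $ i * (d $ i - A $$ (i,j)))"
    and "s_j \<equiv> A $$ (i,j) / (d $ j * (d $ j - A $$ (i,j)))"
  defines "VT \<equiv> mat_of_rows_list 2 [[s_i, 0], [0, s_j]] * (transpose_mat U * A)
               - A $$ (i,j) \<cdot>\<^sub>m (mat_of_rows_list 2
                   [[0, inverse (d $ i - A $$ (i,j))], [inverse (d $ j - A $$ (i,j)), 0]]
                   * transpose_mat U)"
    and "Z \<equiv> mat_inv (1\<^sub>m n - P + outer (ones n) h)"
  shows "Ph = P + U * VT
       \<and> invertible_mat (1\<^sub>m 2 - VT * Z * U)
       \<and> kemeny_centrality A i j
           = complex_of_real (trace_mat (mat_inv (1\<^sub>m 2 - VT * Z * U) * VT * Z * Z * U))"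
proof -
  have G: "connected_weighted_graph n A"
    using A_carrier A_sym A_nonneg d_pos conn by (simp add: connected_weighted_graph_def)
  note Gh = connected_weighted_graph_remove_edge[OF G ij not_cut]
  have U: "U = edge_cols n i j" and VT: "VT = edge_rows A i j"
    using A_carrier by (simp_all add: U_def VT_def edge_cols_def edge_rows_def Let_def s_i_def s_j_def d_def)
  have P: "P \<in> carrier_mat n n" using A_carrier by (simp add: P_def trans_mat_carrier)
  have UV: "U \<in> carrier_mat n 2" "VT \<in> carrier_mat 2 n"
    unfolding U VT using A_carrier by (simp_all add: edge_cols_carrier edge_rows_carrier)
  have Ph_eq: "Ph = P + U * VT"
    unfolding Ph_def P_def U VT
    using trans_mat_remove_edge[OF G ij non_cut_edge_weight_lt_degree[OF G ij not_cut]] .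
  define Zh where "Zh = mat_inv (perturbed_laplacian Ph h)"
  have Z: "Z = mat_inv (perturbed_laplacian P h)" using P by (simp add: Z_def perturbed_laplacian_def)
  note M = perturbed_laplacian_inverse[OF G h_dim h_sum, folded P_def, folded Z]
  note Mh = perturbed_laplacian_inverse[OF Gh h_dim h_sum, folded Ph_def, folded Zh_def]
  have "perturbed_laplacian Ph h = perturbed_laplacian P h - U * VT"
    unfolding Ph_eq using P mult_carrier_mat[OF UV] h_dim by (rule perturbed_laplacian_add)
  note W = low_rank_update_inverse[OF M(1,2) Mh(1,2) UV M(3) Mh(3) this]
  have "invertible_mat (1\<^sub>m 2 - VT * Z * U)" "mat_inv (1\<^sub>m 2 - VT * Z * U) = 1\<^sub>m 2 + VT * Zh * U"
    using mat_inv_right_inverse[of "1\<^sub>m 2 - VT * Z * U" 2 "1\<^sub>m 2 + VT * Zh * U"] W(1) UV Mh(2) M(2)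
    by (auto simp: minus_carrier_mat)
  moreover have "kemeny_centrality A i j = complex_of_real (trace_mat Zh) - complex_of_real (trace_mat Z)"
    using kemeny_eq_trace_fundamental[OF G h_dim h_sum] kemeny_eq_trace_fundamental[OF Gh h_dim h_sum] ij
    by (simp add: kemeny_centrality_def Ph_def Zh_def P_def Z)
  ultimately show ?thesis
    using Ph_eq W(3) by (simp add: trace_mat_eq_mat_trace)
qed

end
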